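(* Under the hypotheses of theorem:ConvergenceRatesSparsityFull (with $1\le p\le2$), one has $\|s^\alpha-s^\ast\|=\mathcal{O}(\sqrt{\delta+\epsilon})$ as $\delta+\epsilon\to0$.
   Context: The hypotheses are: sparsity setting with $X,Y,Z$ Hilbert spaces, $B:X\times Y\to Z$ bilinear with $\|B(c,s)\|\le C\|c\|\|s\|$ and sequentially weak-weak continuous, $P:Y\to Y_n\subset Y$ linear bounded ($Y_n$ finite-dimensional), $s_{\mathrm{calib}}\in Y_n$, $\mathcal{R}_s:Y\to[0,\infty)$ proper convex weakly lower semi-continuous, $\{\varphi_i\}$ an orthonormal basis of $X$, $1\le w_i<\infty$, $\Phi_p(c)=\sum_iw_i|\langle c,\varphi_i\rangle|^p$, fixed $\gamma>0$, $\nu_1,\nu_2>0$, $\tilde{\mathcal{R}}(c,s)=\Phi_p(c)+\frac{\nu_2}{2}\|P(s)-s_{\mathrm{calib}}\|^2+\nu_1\mathcal{R}_s(s)$, $J^{u,s_m}_{\alpha,\beta,\mu}(c,s)=\frac12\|B(c,s)-u\|^2+\frac{\gamma}{2}\|s-s_m\|^2+\frac{\mu}{2}\|P(s)-s_{\mathrm{calib}}\|^2+\alpha\Phi_p(c)+\beta\mathcal{R}_s(s)$; $u^\ast=B(c^\ast,s^\ast)$ with $c^\ast\in\arg\min\{\Phi_p(c):B(c,s^\ast)=u^\ast\}$ and $\Phi_p(c^\ast)<\infty$; $\|u^\ast-u_\delta\|\le\delta$, $\|s^\ast-s_{\mathrm{mod},\epsilon}\|\le\epsilon$; there exist $\kappa_1\in[0,1)$,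 $\kappa_2\ge0$, $0\le\kappa_3<\min\{1,\gamma/(2\alpha_{\max})\}$, $\xi^\ast\in\partial\tilde{\mathcal{R}}(c^\ast,s^\ast)$ with $\langle\xi^\ast,(c^\ast-c,s^\ast-s)\rangle\le\kappa_1D^{\xi^\ast}_{\tilde{\mathcal{R}}}((c,s),(c^\ast,s^\ast))+\kappa_2\|B(c,s)-B(c^\ast,s^\ast)\|+\kappa_3\|s-s^\ast\|^2$ for all $(c,s)$, where $D^{\xi}_{\mathcal{R}}(x,x^\ast)=\mathcal{R}(x)-\mathcal{R}(x^\ast)-\langle\xi,x-x^\ast\rangle$; $(c^\alpha,s^\alpha)$ minimizes $J^{u_\delta,s_{\mathrm{mod},\epsilon}}_{\alpha,\nu_1\alpha,\nu_2\alpha}$, $0<\alpha\le\alpha_{\max}$, and $m(\delta+\epsilon)\le\alpha\le M(\delta+\epsilon)$ for constants $0<m\le M$. *)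

theory Defs
  imports "HOL-Analysis.Analysis"
begin

definition weakly_conv :: "(nat \<Rightarrow> 'a::real_inner) \<Rightarrow> 'a \<Rightarrow> bool" where
  "weakly_conv x l \<longleftrightarrow> (\<forall>v. (\<lambda>n. x n \<bullet> v) \<longlonglongrightarrow> l \<bullet> v)"

definition weakly_lsc :: "('a::real_inner \<Rightarrow> real) \<Rightarrow> bool" where
  "weakly_lsc R \<longleftrightarrow>
     (\<forall>x l. weakly_conv x l \<longrightarrow> ereal (R l) \<le> liminf (\<lambda>n. ereal (R (x n))))"

definition orthonormal_basis :: "('i \<Rightarrow> 'a::real_inner) \<Rightarrow> bool" where
  "orthonormal_basis \<phi> \<longleftrightarrow>
     (\<forall>i. norm (\<phi> i) = 1) \<and> (\<forall>i j. i \<noteq> j \<longrightarrow> \<phi> i \<bullet> \<phi> j = 0) \<and>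
     closure (span (range \<phi>)) = UNIV"

definition Phi :: "('i \<Rightarrow> real) \<Rightarrow> ('i \<Rightarrow> 'a::real_inner) \<Rightarrow> real \<Rightarrow> 'a \<Rightarrow> ereal" where
  "Phi w \<phi> p c = enn2ereal (infsum (\<lambda>i. ennreal (w i * \<bar>c \<bullet> \<phi> i\<bar> powr p)) UNIV)"

definition subgrad :: "('a::real_inner \<Rightarrow> ereal) \<Rightarrow> 'a \<Rightarrow> 'a \<Rightarrow> bool" where
  "subgrad R x0 \<xi> \<longleftrightarrow> \<bar>R x0\<bar> \<noteq> \<infinity> \<and> (\<forall>x. R x0 + ereal (\<xi> \<bullet> (x - x0)) \<le> R x)"

definition bregman :: "('a::real_inner \<Rightarrow> ereal) \<Rightarrow> 'a \<Rightarrow> 'a \<Rightarrow> 'a \<Rightarrow> ereal" where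
  "bregman R \<xi> x x0 = R x - R x0 - ereal (\<xi> \<bullet> (x - x0))"

definition Rtilde :: "('i \<Rightarrow> real) \<Rightarrow> ('i \<Rightarrow> 'x::real_inner) \<Rightarrow> real \<Rightarrow> ('y::real_normed_vector \<Rightarrow> 'y)
    \<Rightarrow> 'y \<Rightarrow> ('y \<Rightarrow> real) \<Rightarrow> real \<Rightarrow> real \<Rightarrow> 'x \<times> 'y \<Rightarrow> ereal" where
  "Rtilde w \<phi> p P scal Rs \<nu>1 \<nu>2 cs =
     Phi w \<phi> p (fst cs) + ereal (\<nu>2 / 2 * (norm (P (snd cs) - scal))\<^sup>2 + \<nu>1 * Rs (snd cs))"

definition Jfun :: "('x::real_inner \<Rightarrow> 'y::real_inner \<Rightarrow> 'z::real_normed_vector) \<Rightarrow> ('i \<Rightarrow> real)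
    \<Rightarrow> ('i \<Rightarrow> 'x) \<Rightarrow> real \<Rightarrow> ('y \<Rightarrow> 'y) \<Rightarrow> 'y \<Rightarrow> ('y \<Rightarrow> real) \<Rightarrow> real
    \<Rightarrow> 'z \<Rightarrow> 'y \<Rightarrow> real \<Rightarrow> real \<Rightarrow> real \<Rightarrow> 'x \<Rightarrow> 'y \<Rightarrow> ereal" where
  "Jfun B w \<phi> p P scal Rs \<gamma> u sm \<alpha> \<beta> \<mu> c s =
     ereal (1/2 * (norm (B c s - u))\<^sup>2 + \<gamma>/2 * (norm (s - sm))\<^sup>2
            + \<mu>/2 * (norm (P s - scal))\<^sup>2 + \<beta> * Rs s)
     + ereal \<alpha> * Phi w \<phi> p c"

end

theory Submission
  imports Defs
begin

text \<open>
  Comparing the Tikhonov functional at its minimiser \<open>(c\<^sup>\<alpha>, s\<^sup>\<alpha>)\<close> with its value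
  at \<open>(c\<^sup>*, s\<^sup>*)\<close>, and bounding the regulariser difference from below by the
  variational source condition, gives
  \<open>\<parallel>B(c\<^sup>\<alpha>,s\<^sup>\<alpha>) - u\<^sub>\<delta>\<parallel>\<^sup>2/2 + \<gamma>/2 \<parallel>s\<^sup>\<alpha> - s\<^sub>m\<parallel>\<^sup>2 \<le> \<delta>\<^sup>2/2 + \<gamma>/2 \<epsilon>\<^sup>2 + \<alpha> (\<kappa>\<^sub>2 \<parallel>B(c\<^sup>\<alpha>,s\<^sup>\<alpha>) - u\<^sup>*\<parallel> + \<kappa>\<^sub>3 \<parallel>s\<^sup>\<alpha> - s\<^sup>*\<parallel>\<^sup>2)\<close>.
  Since \<open>\<kappa>\<^sub>3 \<alpha> < \<gamma>/2\<close>, a weighted Young inequality for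
  \<open>\<parallel>s\<^sup>\<alpha> - s\<^sup>*\<parallel> \<le> \<parallel>s\<^sup>\<alpha> - s\<^sub>m\<parallel> + \<epsilon>\<close> absorbs the last term into the left-hand side, and
  \<open>\<alpha> \<le> M(\<delta> + \<epsilon>)\<close> makes every remaining term \<open>O((\<delta> + \<epsilon>)\<^sup>2)\<close>. Hence
  \<open>\<parallel>s\<^sup>\<alpha> - s\<^sup>*\<parallel> = O(\<delta> + \<epsilon>)\<close>, which is \<open>O(\<surd>(\<delta> + \<epsilon>))\<close> once \<open>\<delta> + \<epsilon> \<le> 1\<close>.
  The hypotheses on weak continuity, convexity, \<open>P\<close>, \<open>Y\<^sub>n\<close>, the basis and \<open>p\<close> only
  serve the existence of minimisers, which the theorem takes as given.
\<close>

lemma weighted_square_sum_le: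
  fixes c t x y :: real
  assumes "0 < c" "c < t"
  shows "c * (x + y)\<^sup>2 \<le> t * x\<^sup>2 + c * t / (t - c) * y\<^sup>2"
proof -
  have "t * x\<^sup>2 + c * t / (t - c) * y\<^sup>2 - c * (x + y)\<^sup>2 = ((t - c) * x - c * y)\<^sup>2 / (t - c)"
    using assms by (simp add: field_simps power2_eq_square)
  moreover have "((t - c) * x - c * y)\<^sup>2 / (t - c) \<ge> 0"
    using assms by simp
  ultimately show ?thesis by linarith
qed

lemma subgrad_source_lower_bound:
  fixes R :: "'a::real_inner \<Rightarrow> ereal"
  assumes sub: "subgrad R x0 \<xi>" and \<kappa>: "0 \<le> \<kappa>" "\<kappa> \<le> 1"
    and source: "ereal (\<xi> \<bullet> (x0 - x)) \<le> ereal \<kappa> * bregman R \<xi> x x0 + ereal r"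
  shows "R x0 \<le> R x + ereal r"
proof -
  obtain r0 where r0: "R x0 = ereal r0"
    using sub unfolding subgrad_def by (cases "R x0") auto
  have sub_x: "ereal (r0 + \<xi> \<bullet> (x - x0)) \<le> R x"
    using sub r0 unfolding subgrad_def by simp
  show ?thesis
  proof (cases "R x")
    case (real rx)
    define D where "D = rx - r0 - \<xi> \<bullet> (x - x0)"
    have "0 \<le> D" using sub_x real unfolding D_def by simp
    moreover have "- (\<xi> \<bullet> (x - x0)) \<le> \<kappa> * D + r"
      using source unfolding bregman_def real r0 D_def
      by (simp add: inner_diff_right)
    ultimately have "- (\<xi> \<bullet> (x - x0)) \<le> D + r"
      using mult_left_le_one_le[of D \<kappa>] \<kappa> by linarith
    then show ?thesis using real r0 unfolding D_def by simp
  qed (use sub_x in auto)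
qed

lemma Jfun_eq_fit_plus_Rtilde:
  "Jfun B w \<phi> p P scal Rs \<gamma> u sm \<alpha> (\<nu>1 * \<alpha>) (\<nu>2 * \<alpha>) c s =
     ereal (1/2 * (norm (B c s - u))\<^sup>2 + \<gamma>/2 * (norm (s - sm))\<^sup>2)
     + ereal \<alpha> * Rtilde w \<phi> p P scal Rs \<nu>1 \<nu>2 (c, s)"
proof -
  have "Phi w \<phi> p c \<noteq> -\<infinity>"
    unfolding Phi_def by simp
  then show ?thesis
    unfolding Jfun_def Rtilde_def
    by (cases "Phi w \<phi> p c") (simp_all add: algebra_simps)
qed

lemma penalized_fit_le:
  fixes F0 F1 \<alpha> r :: real and R0 R1 :: ereal
  assumes min: "ereal F1 + ereal \<alpha> * R1 \<le> ereal F0 + ereal \<alpha> * R0"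
    and fin: "\<bar>R0\<bar> \<noteq> \<infinity>" and lower: "R0 \<le> R1 + ereal r" and \<alpha>: "0 < \<alpha>"
  shows "F1 \<le> F0 + \<alpha> * r"
proof -
  obtain r0 where r0: "R0 = ereal r0" using fin by (cases R0) auto
  obtain r1 where r1: "R1 = ereal r1"
    using min lower \<alpha> r0 by (cases R1) auto
  have "F1 + \<alpha> * r1 \<le> F0 + \<alpha> * r0" "r0 \<le> r1 + r"
    using min lower unfolding r0 r1 by simp_all
  moreover have "\<alpha> * r0 \<le> \<alpha> * (r1 + r)"
    using \<alpha> \<open>r0 \<le> r1 + r\<close> by simp
  ultimately show ?thesis by (simp add: algebra_simps)
qed

lemma tikhonov_square_error_bound:
  fixes a b d g \<delta> \<epsilon> e \<alpha> \<gamma> \<kappa>2 \<kappa>3 \<theta> c M :: real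
  assumes fit: "b\<^sup>2/2 + \<gamma>/2 * d\<^sup>2 \<le> \<delta>\<^sup>2/2 + \<gamma>/2 * \<epsilon>\<^sup>2 + \<alpha> * (\<kappa>2 * g + \<kappa>3 * a\<^sup>2)"
    and g: "g \<le> b + \<delta>" and a: "0 \<le> a" "a \<le> d + \<epsilon>"
    and \<delta>: "0 \<le> \<delta>" "\<delta> \<le> e" and \<epsilon>: "0 \<le> \<epsilon>" "\<epsilon> \<le> e"
    and \<alpha>: "0 \<le> \<alpha>" "\<alpha> \<le> M * e"
    and \<kappa>: "0 \<le> \<kappa>2" "0 \<le> \<kappa>3" "\<alpha> * \<kappa>3 \<le> \<theta>"
    and c: "\<theta> < c" "c < \<gamma>/2"
  shows "(c - \<theta>) * a\<^sup>2 \<le> (1/2 + \<gamma>/2 + c * \<gamma> / (\<gamma> - 2 * c) + M\<^sup>2 * \<kappa>2\<^sup>2/2 + M * \<kappa>2) * e\<^sup>2"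
proof -
  have c_pos: "0 < c"
    using mult_nonneg_nonneg[OF \<alpha>(1) \<kappa>(2)] \<kappa>(3) c(1) by linarith
  have \<alpha>\<kappa>2: "0 \<le> \<alpha> * \<kappa>2" "\<alpha> * \<kappa>2 \<le> M * e * \<kappa>2"
    using \<alpha> \<kappa> by (simp_all add: mult_right_mono)
  have "\<alpha> * \<kappa>2 * g \<le> \<alpha> * \<kappa>2 * b + \<alpha> * \<kappa>2 * \<delta>"
    using g \<alpha>\<kappa>2 by (simp add: mult_left_mono flip: distrib_left)
  moreover have "2 * (\<alpha> * \<kappa>2) * b \<le> (\<alpha> * \<kappa>2)\<^sup>2 + b\<^sup>2"
    by (rule sum_squares_bound)
  ultimately have d_bound:
    "\<gamma>/2 * d\<^sup>2 \<le> \<delta>\<^sup>2/2 + \<gamma>/2 * \<epsilon>\<^sup>2 + (\<alpha> * \<kappa>2)\<^sup>2/2 + \<alpha> * \<kappa>2 * \<delta> + \<alpha> * \<kappa>3 * a\<^sup>2"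
    using fit by (simp add: algebra_simps)
  define q where "q = c * \<gamma> / (\<gamma> - 2 * c)"
  have q: "0 \<le> q" "c * (\<gamma>/2) / (\<gamma>/2 - c) = q"
    using c c_pos unfolding q_def by (simp_all add: field_simps)
  have "c * a\<^sup>2 \<le> c * (d + \<epsilon>)\<^sup>2"
    using a c_pos by (intro mult_left_mono power_mono) auto
  also have "\<dots> \<le> \<gamma>/2 * d\<^sup>2 + q * \<epsilon>\<^sup>2"
    using weighted_square_sum_le[of c "\<gamma>/2" d \<epsilon>, unfolded q(2)] c c_pos by simp
  finally have "(c - \<theta>) * a\<^sup>2 \<le> \<delta>\<^sup>2/2 + (\<gamma>/2 + q) * \<epsilon>\<^sup>2 + (\<alpha> * \<kappa>2)\<^sup>2/2 + \<alpha> * \<kappa>2 * \<delta>"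
    using d_bound mult_right_mono[OF \<kappa>(3) zero_le_power2[of a]]
    by (simp add: algebra_simps)
  also have "\<dots> \<le> e\<^sup>2/2 + (\<gamma>/2 + q) * e\<^sup>2 + M\<^sup>2 * \<kappa>2\<^sup>2 * e\<^sup>2/2 + M * \<kappa>2 * e\<^sup>2"
  proof -
    have "\<delta>\<^sup>2 \<le> e\<^sup>2" "\<epsilon>\<^sup>2 \<le> e\<^sup>2"
      using \<delta> \<epsilon> by (simp_all add: power_mono)
    moreover have "(\<gamma>/2 + q) * \<epsilon>\<^sup>2 \<le> (\<gamma>/2 + q) * e\<^sup>2"
      using \<open>\<epsilon>\<^sup>2 \<le> e\<^sup>2\<close> q(1) c c_pos by (intro mult_left_mono) auto
    moreover have "(\<alpha> * \<kappa>2)\<^sup>2 \<le> M\<^sup>2 * \<kappa>2\<^sup>2 * e\<^sup>2"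
      using power_mono[OF \<alpha>\<kappa>2(2) \<alpha>\<kappa>2(1), of 2] by (simp add: power_mult_distrib algebra_simps)
    moreover have "\<alpha> * \<kappa>2 * \<delta> \<le> M * \<kappa>2 * e\<^sup>2"
      using mult_mono[OF \<alpha>\<kappa>2(2) \<delta>(2)] \<alpha>\<kappa>2 \<delta> by (simp add: power2_eq_square algebra_simps)
    ultimately show ?thesis by linarith
  qed
  finally show ?thesis
    unfolding q_def by (simp add: algebra_simps)
qed

lemma tikhonov_minimiser_fit_bound:
  fixes B :: "'x::real_inner \<Rightarrow> 'y::real_inner \<Rightarrow> 'z::real_normed_vector"
  assumes min: "Jfun B w \<phi> p P scal Rs \<gamma> u sm \<alpha> (\<nu>1 * \<alpha>) (\<nu>2 * \<alpha>) c\<alpha> s\<alpha>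
      \<le> Jfun B w \<phi> p P scal Rs \<gamma> u sm \<alpha> (\<nu>1 * \<alpha>) (\<nu>2 * \<alpha>) cstar sstar"
    and sub: "subgrad (Rtilde w \<phi> p P scal Rs \<nu>1 \<nu>2) (cstar, sstar) \<xi>"
    and \<kappa>1: "0 \<le> \<kappa>1" "\<kappa>1 \<le> 1"
    and source: "ereal (\<xi> \<bullet> ((cstar, sstar) - (c\<alpha>, s\<alpha>)))
      \<le> ereal \<kappa>1 * bregman (Rtilde w \<phi> p P scal Rs \<nu>1 \<nu>2) \<xi> (c\<alpha>, s\<alpha>) (cstar, sstar)
        + ereal (\<kappa>2 * norm (B c\<alpha> s\<alpha> - B cstar sstar) + \<kappa>3 * (norm (s\<alpha> - sstar))\<^sup>2)"
    and \<alpha>: "0 < \<alpha>" and \<gamma>: "0 \<le> \<gamma>"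
    and data: "norm (B cstar sstar - u) \<le> \<delta>" "norm (sstar - sm) \<le> \<epsilon>"
  shows "(norm (B c\<alpha> s\<alpha> - u))\<^sup>2/2 + \<gamma>/2 * (norm (s\<alpha> - sm))\<^sup>2
    \<le> \<delta>\<^sup>2/2 + \<gamma>/2 * \<epsilon>\<^sup>2
      + \<alpha> * (\<kappa>2 * norm (B c\<alpha> s\<alpha> - B cstar sstar) + \<kappa>3 * (norm (s\<alpha> - sstar))\<^sup>2)"
proof -
  have "1/2 * (norm (B c\<alpha> s\<alpha> - u))\<^sup>2 + \<gamma>/2 * (norm (s\<alpha> - sm))\<^sup>2
      \<le> 1/2 * (norm (B cstar sstar - u))\<^sup>2 + \<gamma>/2 * (norm (sstar - sm))\<^sup>2
        + \<alpha> * (\<kappa>2 * norm (B c\<alpha> s\<alpha> - B cstar sstar) + \<kappa>3 * (norm (s\<alpha> - sstar))\<^sup>2)"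
  proof (rule penalized_fit_le[OF _ _ _ \<alpha>])
    show "ereal (1/2 * (norm (B c\<alpha> s\<alpha> - u))\<^sup>2 + \<gamma>/2 * (norm (s\<alpha> - sm))\<^sup>2)
        + ereal \<alpha> * Rtilde w \<phi> p P scal Rs \<nu>1 \<nu>2 (c\<alpha>, s\<alpha>)
      \<le> ereal (1/2 * (norm (B cstar sstar - u))\<^sup>2 + \<gamma>/2 * (norm (sstar - sm))\<^sup>2)
        + ereal \<alpha> * Rtilde w \<phi> p P scal Rs \<nu>1 \<nu>2 (cstar, sstar)"
      using min by (simp only: Jfun_eq_fit_plus_Rtilde)
    show "\<bar>Rtilde w \<phi> p P scal Rs \<nu>1 \<nu>2 (cstar, sstar)\<bar> \<noteq> \<infinity>"
      using sub unfolding subgrad_def ..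
    show "Rtilde w \<phi> p P scal Rs \<nu>1 \<nu>2 (cstar, sstar) \<le> Rtilde w \<phi> p P scal Rs \<nu>1 \<nu>2 (c\<alpha>, s\<alpha>)
        + ereal (\<kappa>2 * norm (B c\<alpha> s\<alpha> - B cstar sstar) + \<kappa>3 * (norm (s\<alpha> - sstar))\<^sup>2)"
      using sub \<kappa>1 source by (rule subgrad_source_lower_bound)
  qed
  moreover have "(norm (B cstar sstar - u))\<^sup>2 \<le> \<delta>\<^sup>2" "(norm (sstar - sm))\<^sup>2 \<le> \<epsilon>\<^sup>2"
    using data by (simp_all add: power_mono)
  ultimately show ?thesis
    using mult_left_mono[of "(norm (sstar - sm))\<^sup>2" "\<epsilon>\<^sup>2" "\<gamma>/2"] \<gamma> by linarith
qed

lemma le_sqrt_mult_sqrt_of_square_le: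
  fixes k C a e :: real
  assumes "0 < k" "0 \<le> C" "k * a\<^sup>2 \<le> C * e\<^sup>2" "0 \<le> e" "e \<le> 1"
  shows "a \<le> sqrt (C / k) * sqrt e"
proof -
  have "e\<^sup>2 \<le> e"
    using assms(4,5) by (simp add: power2_eq_square mult_left_le)
  with assms(2,3) have "k * a\<^sup>2 \<le> C * e"
    using mult_left_mono[of "e\<^sup>2" e C] by linarith
  with assms(1) have "a\<^sup>2 \<le> C / k * e"
    by (simp add: field_simps)
  then show ?thesis
    by (simp add: real_le_rsqrt flip: real_sqrt_mult)
qed

theorem mainTheorem14:
  fixes B :: "'x::{real_inner,complete_space} \<Rightarrow> 'y::{real_inner,complete_space} \<Rightarrow> 'z::{real_inner,complete_space}"
    and P :: "'y \<Rightarrow> 'y" and Yn :: "'y set" and scal :: 'y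
    and Rs :: "'y \<Rightarrow> real"
    and \<phi> :: "'i \<Rightarrow> 'x" and w :: "'i \<Rightarrow> real" and p :: real
    and \<gamma> \<nu>1 \<nu>2 :: real
    and cstar :: 'x and sstar :: 'y and ustar :: 'z
    and \<kappa>1 \<kappa>2 \<kappa>3 \<alpha>max m M :: real
    and \<xi> :: "'x \<times> 'y"
  assumes B_bil: "bounded_bilinear B"
    and B_weak: "\<And>c s c0 s0. weakly_conv c c0 \<Longrightarrow> weakly_conv s s0 \<Longrightarrow>
                   weakly_conv (\<lambda>n. B (c n) (s n)) (B c0 s0)"
    and P_lin: "bounded_linear P"
    and Yn_sub: "subspace Yn" and Yn_fin: "\<exists>A. finite A \<and> Yn = span A"
    and P_range: "range P \<subseteq> Yn"
    and scal_in: "scal \<in> Yn"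
    and Rs_nonneg: "\<And>s. Rs s \<ge> 0"
    and Rs_convex: "convex_on UNIV Rs"
    and Rs_wlsc: "weakly_lsc Rs"
    and onb: "orthonormal_basis \<phi>"
    and w_ge: "\<And>i. 1 \<le> w i"
    and p_ge: "1 \<le> p" and p_le: "p \<le> 2"
    and \<gamma>_pos: "\<gamma> > 0" and \<nu>1_pos: "\<nu>1 > 0" and \<nu>2_pos: "\<nu>2 > 0"
    and ustar_def: "ustar = B cstar sstar"
    and cstar_min: "\<And>c. B c sstar = ustar \<Longrightarrow> Phi w \<phi> p cstar \<le> Phi w \<phi> p c"
    and cstar_fin: "Phi w \<phi> p cstar < \<infinity>"
    and \<alpha>max_pos: "\<alpha>max > 0"
    and \<kappa>1: "0 \<le> \<kappa>1" "\<kappa>1 < 1"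
    and \<kappa>2: "0 \<le> \<kappa>2"
    and \<kappa>3: "0 \<le> \<kappa>3" "\<kappa>3 < min 1 (\<gamma> / (2 * \<alpha>max))"
    and \<xi>_sub: "subgrad (Rtilde w \<phi> p P scal Rs \<nu>1 \<nu>2) (cstar, sstar) \<xi>"
    and source: "\<And>c s. ereal (\<xi> \<bullet> ((cstar, sstar) - (c, s)))
        \<le> ereal \<kappa>1 * bregman (Rtilde w \<phi> p P scal Rs \<nu>1 \<nu>2) \<xi> (c, s) (cstar, sstar)
          + ereal (\<kappa>2 * norm (B c s - B cstar sstar) + \<kappa>3 * (norm (s - sstar))\<^sup>2)"
    and mM: "0 < m" "m \<le> M"
  shows "\<exists>K \<eta>. \<eta> > 0 \<and>
    (\<forall>\<delta> \<epsilon> u\<delta> sm \<alpha> c\<alpha> s\<alpha>.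
       0 \<le> \<delta> \<and> 0 \<le> \<epsilon> \<and> \<delta> + \<epsilon> < \<eta> \<and>
       norm (ustar - u\<delta>) \<le> \<delta> \<and> norm (sstar - sm) \<le> \<epsilon> \<and>
       0 < \<alpha> \<and> \<alpha> \<le> \<alpha>max \<and> m * (\<delta> + \<epsilon>) \<le> \<alpha> \<and> \<alpha> \<le> M * (\<delta> + \<epsilon>) \<and>
       (\<forall>c s. Jfun B w \<phi> p P scal Rs \<gamma> u\<delta> sm \<alpha> (\<nu>1 * \<alpha>) (\<nu>2 * \<alpha>) c\<alpha> s\<alpha>
              \<le> Jfun B w \<phi> p P scal Rs \<gamma> u\<delta> sm \<alpha> (\<nu>1 * \<alpha>) (\<nu>2 * \<alpha>) c s)
       \<longrightarrow> norm (s\<alpha> - sstar) \<le> K * sqrt (\<delta> + \<epsilon>))"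
proof -
  define \<theta> where "\<theta> = \<kappa>3 * \<alpha>max"
  define c where "c = (\<gamma>/2 + \<theta>)/2"
  define C where "C = 1/2 + \<gamma>/2 + c * \<gamma> / (\<gamma> - 2 * c) + M\<^sup>2 * \<kappa>2\<^sup>2/2 + M * \<kappa>2"
  have "0 \<le> \<theta>" "\<theta> < \<gamma>/2"
    using \<kappa>3 \<alpha>max_pos unfolding \<theta>_def by (simp_all add: field_simps)
  then have c: "\<theta> < c" "c < \<gamma>/2" and "0 < c"
    unfolding c_def by simp_all
  then have "0 \<le> C"
    using \<gamma>_pos mM \<kappa>2 unfolding C_def by (simp add: add_nonneg_nonneg)
  show ?thesis
  proof (rule exI[of _ "sqrt (C / (c - \<theta>))"], rule exI[of _ "1::real"], intro conjI allI impI)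
    fix \<delta> \<epsilon> u\<delta> sm \<alpha> c\<alpha> s\<alpha>
    assume H: "0 \<le> \<delta> \<and> 0 \<le> \<epsilon> \<and> \<delta> + \<epsilon> < 1 \<and>
       norm (ustar - u\<delta>) \<le> \<delta> \<and> norm (sstar - sm) \<le> \<epsilon> \<and>
       0 < \<alpha> \<and> \<alpha> \<le> \<alpha>max \<and> m * (\<delta> + \<epsilon>) \<le> \<alpha> \<and> \<alpha> \<le> M * (\<delta> + \<epsilon>) \<and>
       (\<forall>c s. Jfun B w \<phi> p P scal Rs \<gamma> u\<delta> sm \<alpha> (\<nu>1 * \<alpha>) (\<nu>2 * \<alpha>) c\<alpha> s\<alpha>
              \<le> Jfun B w \<phi> p P scal Rs \<gamma> u\<delta> sm \<alpha> (\<nu>1 * \<alpha>) (\<nu>2 * \<alpha>) c s)"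
    have data: "norm (B cstar sstar - u\<delta>) \<le> \<delta>" "norm (sstar - sm) \<le> \<epsilon>"
      using H ustar_def by (simp_all add: norm_minus_commute)
    have fit: "(norm (B c\<alpha> s\<alpha> - u\<delta>))\<^sup>2/2 + \<gamma>/2 * (norm (s\<alpha> - sm))\<^sup>2
        \<le> \<delta>\<^sup>2/2 + \<gamma>/2 * \<epsilon>\<^sup>2
          + \<alpha> * (\<kappa>2 * norm (B c\<alpha> s\<alpha> - B cstar sstar) + \<kappa>3 * (norm (s\<alpha> - sstar))\<^sup>2)"
    proof (rule tikhonov_minimiser_fit_bound[OF _ \<xi>_sub _ _ source[of c\<alpha> s\<alpha>] _ _ data])
      show "Jfun B w \<phi> p P scal Rs \<gamma> u\<delta> sm \<alpha> (\<nu>1 * \<alpha>) (\<nu>2 * \<alpha>) c\<alpha> s\<alpha>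
          \<le> Jfun B w \<phi> p P scal Rs \<gamma> u\<delta> sm \<alpha> (\<nu>1 * \<alpha>) (\<nu>2 * \<alpha>) cstar sstar"
        using H by blast
    qed (use H \<kappa>1 \<gamma>_pos in auto)
    have g: "norm (B c\<alpha> s\<alpha> - B cstar sstar) \<le> norm (B c\<alpha> s\<alpha> - u\<delta>) + \<delta>"
      using data(1) by (intro norm_diff_triangle_le) (auto simp: norm_minus_commute)
    have a: "norm (s\<alpha> - sstar) \<le> norm (s\<alpha> - sm) + \<epsilon>"
      using data(2) by (intro norm_diff_triangle_le) (auto simp: norm_minus_commute)
    have \<alpha>\<kappa>3: "\<alpha> * \<kappa>3 \<le> \<theta>"
      using H mult_right_mono[of \<alpha> \<alpha>max \<kappa>3] \<kappa>3(1) unfolding \<theta>_def by (simp add: mult.commute)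
    have bounds: "0 \<le> \<delta>" "\<delta> \<le> \<delta> + \<epsilon>" "0 \<le> \<epsilon>" "\<epsilon> \<le> \<delta> + \<epsilon>" "0 \<le> \<alpha>" "\<alpha> \<le> M * (\<delta> + \<epsilon>)"
      using H by auto
    have "(c - \<theta>) * (norm (s\<alpha> - sstar))\<^sup>2 \<le> C * (\<delta> + \<epsilon>)\<^sup>2"
      unfolding C_def
      using tikhonov_square_error_bound[OF fit g norm_ge_zero a bounds \<kappa>2 \<kappa>3(1) \<alpha>\<kappa>3 c] .
    then show "norm (s\<alpha> - sstar) \<le> sqrt (C / (c - \<theta>)) * sqrt (\<delta> + \<epsilon>)"
      using le_sqrt_mult_sqrt_of_square_le \<open>0 \<le> C\<close> c H by simp
  qed simp
qed

end
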